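(* Let $d\geq 1000$ and let $\Omega\subseteq\mathbb{R}^d$ be bounded and measurable. Set $\Delta=\left(\frac{\sqrt d}{4\log d}\right)^d$. Then there exists a finite set $X\subset\Omega$ with \[ |X|\geq(1-1/d)\frac{\Delta}{2^d}\mathrm{Vol}(\Omega) \] such that the graph $G=G(X,r_d)$ satisfies \[ \Delta(G)\leq\Delta\big(1+\Delta^{-1/3}\big)\quad\text{and}\quad \Delta_2(G)\leq\Delta\cdot e^{-(\log d)^2/8}. \]
   Context: $r_d$ is the radius of the Euclidean ball of volume $1$ in $\mathbb{R}^d$. For a finite $X\subseteq\mathbb{R}^d$ and $r>0$, $G(X,r)$ is the graph with vertex set $X$ in which distinct $x,y$ are adjacent iff $\|x-y\|\leq 2r$. $\Delta(G)$ is the maximum degree, $\Delta_2(G)$ the maximum over distinct vertex pairs of the number of common neighbours. $\mathrm{Vol}$ is Lebesgue measure; $\log$ is the natural logarithm. *)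

theory Defs
  imports "HOL-Analysis.Analysis"
begin

definition unit_vol_radius :: "'a::euclidean_space itself \<Rightarrow> real" where
  "unit_vol_radius _ = (THE r. r > 0 \<and> measure lebesgue (ball (0::'a) r) = 1)"

definition ball_graph_nbrs :: "'a::real_normed_vector set \<Rightarrow> real \<Rightarrow> 'a \<Rightarrow> 'a set" where
  "ball_graph_nbrs X r x = {y \<in> X. y \<noteq> x \<and> norm (x - y) \<le> 2 * r}"

definition max_degree :: "'a::real_normed_vector set \<Rightarrow> real \<Rightarrow> nat" where
  "max_degree X r = Max (insert 0 ((\<lambda>x. card (ball_graph_nbrs X r x)) ` X))"

definition max_codegree :: "'a::real_normed_vector set \<Rightarrow> real \<Rightarrow> nat" where
  "max_codegree X r = Max (insert 0 ((\<lambda>(x,y). card (ball_graph_nbrs X r x \<inter> ball_graph_nbrs X r y))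
      ` {(x,y). x \<in> X \<and> y \<in> X \<and> x \<noteq> y}))"

end

theory Submission
  imports Defs "HOL-Probability.Probability"
begin

(*
  Alteration method.  Put N \<approx> (1 - 1/(2d)) \<Delta> Vol(\<Omega>) / 2^d independent uniform points into a Borel
  set C \<subseteq> \<Omega> of full measure, where 2^d / Vol(\<Omega>) bounds the probability of hitting a ball of
  radius 2 r_d.  A point is bad if it lies outside C, lies within distance t = 4 r_d log d / sqrt d
  of another point, has at least \<Delta> points within distance 2 r_d, or has at least
  \<Delta> exp (-(log d)^2/8) such points in common with a point at distance between t and 4 r_d.
  Since the centres of two such balls are t-separated, their intersection lies in a ball of radius
  2 r_d sqrt (1 - (log d)^2/d), which makes common neighbours rare; Chernoff bounds then show that
  every point is bad with probability at most 1/(2d).  Hence some configuration has at most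
  N/(2d) bad points, and deleting them leaves the required set.
*)

lemma apollonius:
  fixes x y z :: "'a::real_inner"
  shows "(dist z (midpoint x y))\<^sup>2 = ((dist z x)\<^sup>2 + (dist z y)\<^sup>2) / 2 - (dist x y)\<^sup>2 / 4"
  unfolding dist_norm midpoint_def power2_norm_eq_inner
  by (simp add: inner_diff_left inner_diff_right inner_add_left inner_add_right inner_commute
      field_simps)

lemma cball_inter_cball_subset_cball_midpoint:
  fixes x y :: "'a::real_inner"
  assumes "0 \<le> t" "t \<le> dist x y"
  shows "cball x R \<inter> cball y R \<subseteq> cball (midpoint x y) (sqrt (R\<^sup>2 - t\<^sup>2 / 4))"
proof
  fix z assume "z \<in> cball x R \<inter> cball y R"
  then have "(dist z x)\<^sup>2 \<le> R\<^sup>2" "(dist z y)\<^sup>2 \<le> R\<^sup>2"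
    by (auto simp: dist_commute intro!: power_mono)
  moreover have "t\<^sup>2 \<le> (dist x y)\<^sup>2"
    using assms by (intro power_mono)
  ultimately have "(dist z (midpoint x y))\<^sup>2 \<le> R\<^sup>2 - t\<^sup>2 / 4"
    using apollonius[of z x y] by argo
  then show "z \<in> cball (midpoint x y) (sqrt (R\<^sup>2 - t\<^sup>2 / 4))"
    by (simp add: dist_commute real_le_rsqrt)
qed

lemma unit_vol_radius_eq:
  "unit_vol_radius TYPE('a::euclidean_space) = root DIM('a) (1 / unit_ball_vol DIM('a))"
proof -
  let ?n = "DIM('a)" and ?w = "unit_ball_vol DIM('a)"
  have w: "?w \<noteq> 0"
    using unit_ball_vol_pos[of "real ?n"] by linarith
  have vol: "measure lebesgue (ball (0::'a) \<rho>) = ?w * \<rho> ^ ?n" if "0 \<le> \<rho>" for \<rho>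
    using content_ball[OF that, of 0] by simp
  show ?thesis
    unfolding unit_vol_radius_def
  proof (rule the_equality)
    show "0 < root ?n (1 / ?w) \<and> measure lebesgue (ball (0::'a) (root ?n (1 / ?w))) = 1"
      using vol w by simp
  next
    fix \<rho> assume \<rho>: "0 < \<rho> \<and> measure lebesgue (ball (0::'a) \<rho>) = 1"
    then have "\<rho> ^ ?n = 1 / ?w"
      using vol[of \<rho>] w by (simp add: field_simps)
    then show "\<rho> = root ?n (1 / ?w)"
      using \<rho> by (metis DIM_positive less_imp_le real_root_pos_unique)
  qed
qed

lemma unit_vol_radius_pos: "0 < unit_vol_radius TYPE('a::euclidean_space)"
  by (simp add: unit_vol_radius_eq)

lemma unit_ball_vol_mult_power:
  "unit_ball_vol DIM('a) * \<rho> ^ DIM('a) = (\<rho> / unit_vol_radius TYPE('a::euclidean_space)) ^ DIM('a)"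
proof -
  have "unit_vol_radius TYPE('a) ^ DIM('a) = 1 / unit_ball_vol DIM('a)"
    by (simp add: unit_vol_radius_eq real_root_pow_pos2)
  then show ?thesis
    by (simp add: power_divide field_simps)
qed

lemma emeasure_cball_unit_vol_radius:
  "0 \<le> \<rho> \<Longrightarrow> emeasure lborel (cball (c::'a::euclidean_space) \<rho>) =
     ennreal ((\<rho> / unit_vol_radius TYPE('a)) ^ DIM('a))"
  by (simp add: emeasure_cball unit_ball_vol_mult_power)

lemma emeasure_ball_unit_vol_radius:
  "0 \<le> \<rho> \<Longrightarrow> emeasure lborel (ball (c::'a::euclidean_space) \<rho>) =
     ennreal ((\<rho> / unit_vol_radius TYPE('a)) ^ DIM('a))"
  by (simp add: emeasure_ball unit_ball_vol_mult_power)

lemma max_degree_le: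
  assumes "finite X" "0 \<le> B" "\<And>x. x \<in> X \<Longrightarrow> real (card (ball_graph_nbrs X r x)) \<le> B"
  shows "real (max_degree X r) \<le> B"
proof -
  have "max_degree X r \<in> insert 0 ((\<lambda>x. card (ball_graph_nbrs X r x)) ` X)"
    unfolding max_degree_def using assms(1) by (intro Max_in) auto
  then show ?thesis
    using assms(2,3) by auto
qed

lemma max_codegree_le:
  assumes "finite X" "0 \<le> B"
    and "\<And>x y. x \<in> X \<Longrightarrow> y \<in> X \<Longrightarrow> x \<noteq> y \<Longrightarrow>
      real (card (ball_graph_nbrs X r x \<inter> ball_graph_nbrs X r y)) \<le> B"
  shows "real (max_codegree X r) \<le> B"
proof -
  have "finite {(x, y). x \<in> X \<and> y \<in> X \<and> x \<noteq> y}"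
    by (rule finite_subset[of _ "X \<times> X"]) (use assms(1) in auto)
  then have "max_codegree X r \<in> insert 0 ((\<lambda>(x, y). card (ball_graph_nbrs X r x \<inter> ball_graph_nbrs X r y))
      ` {(x, y). x \<in> X \<and> y \<in> X \<and> x \<noteq> y})"
    unfolding max_codegree_def by (intro Max_in) auto
  then show ?thesis
    using assms(2,3) by auto
qed

lemma ball_graph_nbrs_disjoint:
  assumes "4 * r < dist x y"
  shows "ball_graph_nbrs X r x \<inter> ball_graph_nbrs X r y = {}"
proof -
  have "dist x y \<le> 4 * r" if "norm (x - z) \<le> 2 * r" "norm (y - z) \<le> 2 * r" for z
    using dist_triangle2[of x y z] that by (simp add: dist_norm)
  then show ?thesis
    using assms by (force simp: ball_graph_nbrs_def)
qed

lemma card_ball_graph_nbrs_image_le: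
  fixes \<omega> :: "'i \<Rightarrow> 'a::real_normed_vector"
  assumes "finite I" "G \<subseteq> I"
  shows "card (ball_graph_nbrs (\<omega> ` G) r (\<omega> i)) \<le> card {l \<in> I - {i}. \<omega> l \<in> cball (\<omega> i) (2 * r)}"
proof -
  have "ball_graph_nbrs (\<omega> ` G) r (\<omega> i) \<subseteq> \<omega> ` {l \<in> I - {i}. \<omega> l \<in> cball (\<omega> i) (2 * r)}"
    using assms(2) by (auto simp: ball_graph_nbrs_def dist_norm)
  then show ?thesis
    using assms(1) by (intro order_trans[OF card_mono card_image_le]) auto
qed

lemma card_common_ball_graph_nbrs_image_le:
  fixes \<omega> :: "'i \<Rightarrow> 'a::real_normed_vector"
  assumes "finite I" "G \<subseteq> I"
  shows "card (ball_graph_nbrs (\<omega> ` G) r (\<omega> i) \<inter> ball_graph_nbrs (\<omega> ` G) r (\<omega> j)) \<le>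
    card {l \<in> I - {i, j}. \<omega> l \<in> cball (\<omega> i) (2 * r) \<inter> cball (\<omega> j) (2 * r)}"
proof -
  have "ball_graph_nbrs (\<omega> ` G) r (\<omega> i) \<inter> ball_graph_nbrs (\<omega> ` G) r (\<omega> j) \<subseteq>
      \<omega> ` {l \<in> I - {i, j}. \<omega> l \<in> cball (\<omega> i) (2 * r) \<inter> cball (\<omega> j) (2 * r)}"
    using assms(2) by (auto simp: ball_graph_nbrs_def dist_norm)
  then show ?thesis
    using assms(1) by (intro order_trans[OF card_mono card_image_le]) auto
qed

lemma borel_measurable_card_Collect:
  assumes "finite J" "\<And>l. l \<in> J \<Longrightarrow> Measurable.pred N (P l)"
  shows "(\<lambda>\<omega>. real (card {l \<in> J. P l \<omega>})) \<in> borel_measurable N"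
proof -
  have "real (card {l \<in> J. P l \<omega>}) = (\<Sum>l\<in>J. if P l \<omega> then 1 else 0)" for \<omega>
    using assms(1) by (simp add: sum.If_cases Int_def)
  moreover have "(\<lambda>\<omega>. \<Sum>l\<in>J. if P l \<omega> then 1 else 0 :: real) \<in> borel_measurable N"
    using assms(2) by measurable
  ultimately show ?thesis
    by simp
qed

lemma (in prob_space) exists_card_le_sum_prob:
  assumes "finite I" "\<And>i. i \<in> I \<Longrightarrow> {\<omega> \<in> space M. E i \<omega>} \<in> events"
  shows "\<exists>\<omega>\<in>space M. real (card {i \<in> I. E i \<omega>}) \<le> (\<Sum>i\<in>I. prob {\<omega> \<in> space M. E i \<omega>})"
proof (rule ccontr)
  define f where "f \<omega> = (\<Sum>i\<in>I. indicator {\<omega> \<in> space M. E i \<omega>} \<omega> :: real)" for \<omega>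
  have card_eq: "real (card {i \<in> I. E i \<omega>}) = f \<omega>" if "\<omega> \<in> space M" for \<omega>
    using assms(1) that by (simp add: f_def indicator_def sum.If_cases Int_def)
  have "integrable M f"
    unfolding f_def using assms
    by (intro Bochner_Integration.integrable_sum integrable_real_indicator) (auto simp: less_top[symmetric])
  moreover assume "\<not> ?thesis"
  then have "AE \<omega> in M. (\<Sum>i\<in>I. prob {\<omega> \<in> space M. E i \<omega>}) < f \<omega>"
    by (intro AE_I2) (auto simp: card_eq not_le)
  ultimately have "(\<Sum>i\<in>I. prob {\<omega> \<in> space M. E i \<omega>}) < expectation f"
    by (rule expectation_greater)
  also have "expectation f = (\<Sum>i\<in>I. prob {\<omega> \<in> space M. E i \<omega>})"
    unfolding f_def using assms
    by (subst Bochner_Integration.integral_sum) (auto simp: less_top[symmetric] intro!: sum.cong arg_cong[where f=prob])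
  finally show False
    by simp
qed

locale iid_points = prob_space M for M :: "'a::euclidean_space measure" +
  assumes sets_M [measurable_cong]: "sets M = sets borel"
begin

abbreviation sample :: "'i set \<Rightarrow> ('i \<Rightarrow> 'a) measure" where
  "sample I \<equiv> PiM I (\<lambda>_. M)"

lemma space_M: "space M = UNIV"
  using sets_eq_imp_space_eq[OF sets_M] by simp

lemma prob_space_sample: "prob_space (sample I)"
  by (simp add: prob_space_PiM prob_space_axioms)

lemma borel_measurable_card_in_cball:
  assumes "finite J" "J \<subseteq> I" "i \<in> I"
  shows "(\<lambda>\<omega>. real (card {l \<in> J. \<omega> l \<in> cball (\<omega> i) R})) \<in> borel_measurable (sample I)"
  using assms unfolding mem_cball by (intro borel_measurable_card_Collect) auto

lemma borel_measurable_card_in_lens: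
  assumes "finite J" "J \<subseteq> I" "i \<in> I" "j \<in> I"
  shows "(\<lambda>\<omega>. real (card {l \<in> J. \<omega> l \<in> cball (\<omega> i) R \<inter> cball (\<omega> j) R})) \<in> borel_measurable (sample I)"
  using assms unfolding Int_iff mem_cball by (intro borel_measurable_card_Collect) auto

lemma emeasure_sample_pick:
  assumes "finite I" "i \<in> I" and [measurable]: "Measurable.pred (sample I) Q"
  shows "emeasure (sample I) {\<omega> \<in> space (sample I). Q \<omega>} =
    (\<integral>\<^sup>+y. emeasure (sample (I - {i})) {x \<in> space (sample (I - {i})). Q (x(i := y))} \<partial>M)"
    (is "_ = ?rhs")
proof -
  interpret product_sigma_finite "\<lambda>_. M"
    by (simp add: product_sigma_finite_def sigma_finite_measure_axioms)
  have I: "insert i (I - {i}) = I"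
    using assms(2) by auto
  have "emeasure (sample I) {\<omega> \<in> space (sample I). Q \<omega>} =
      (\<integral>\<^sup>+\<omega>. indicator {\<omega> \<in> space (sample I). Q \<omega>} \<omega> \<partial>sample I)"
    by simp
  also have "\<dots> = (\<integral>\<^sup>+y. \<integral>\<^sup>+x. indicator {\<omega> \<in> space (sample I). Q \<omega>} (x(i := y))
      \<partial>sample (I - {i}) \<partial>M)"
    using product_nn_integral_insert_rev[of "I - {i}" i "indicator {\<omega> \<in> space (sample I). Q \<omega>}",
        unfolded I] assms(1) by simp
  also have "\<dots> = ?rhs"
  proof (intro nn_integral_cong)
    fix y
    have [measurable]: "(\<lambda>x. x(i := y)) \<in> measurable (sample (I - {i})) (sample I)"
      using assms(2) by (intro measurable_fun_upd[where J="I - {i}"]) (auto simp: space_M)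
    have "(\<integral>\<^sup>+x. indicator {\<omega> \<in> space (sample I). Q \<omega>} (x(i := y)) \<partial>sample (I - {i})) =
        (\<integral>\<^sup>+x. indicator {x \<in> space (sample (I - {i})). Q (x(i := y))} x \<partial>sample (I - {i}))"
      using assms(2)
      by (intro nn_integral_cong) (auto simp: space_M space_PiM PiE_def extensional_def indicator_def)
    also have "\<dots> = emeasure (sample (I - {i})) {x \<in> space (sample (I - {i})). Q (x(i := y))}"
      by (intro nn_integral_indicator) measurable
    finally show "(\<integral>\<^sup>+x. indicator {\<omega> \<in> space (sample I). Q \<omega>} (x(i := y)) \<partial>sample (I - {i})) =
        emeasure (sample (I - {i})) {x \<in> space (sample (I - {i})). Q (x(i := y))}" .
  qed
  finally show ?thesis .
qed

lemma nn_integral_exp_indicator: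
  assumes "A \<in> sets borel" "0 \<le> s"
  shows "(\<integral>\<^sup>+z. ennreal (exp (s * indicator A z)) \<partial>M) = ennreal (1 + (exp s - 1) * measure M A)"
proof -
  have "ennreal (exp s) = 1 + ennreal (exp s - 1)"
    using ennreal_plus[of 1 "exp s - 1"] assms(2) by simp
  then have "ennreal (exp (s * indicator A z)) = 1 + ennreal (exp s - 1) * indicator A z" for z
    by (simp add: indicator_def)
  then have "(\<integral>\<^sup>+z. ennreal (exp (s * indicator A z)) \<partial>M) = 1 + ennreal (exp s - 1) * emeasure M A"
    using assms(1) by (simp add: nn_integral_add nn_integral_cmult_indicator emeasure_space_1)
  also have "\<dots> = ennreal (1 + (exp s - 1) * measure M A)"
    using assms(2) by (simp add: emeasure_eq_measure ennreal_mult ennreal_plus)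
  finally show ?thesis .
qed

lemma nn_integral_exp_card:
  fixes J :: "'i set"
  assumes "finite J" "A \<in> sets borel" "0 \<le> s"
  shows "(\<integral>\<^sup>+x. ennreal (exp (s * real (card {l \<in> J. x l \<in> A}))) \<partial>sample J) =
    ennreal ((1 + (exp s - 1) * measure M A) ^ card J)"
proof -
  interpret product_sigma_finite "\<lambda>_. M"
    by (simp add: product_sigma_finite_def sigma_finite_measure_axioms)
  have "ennreal (exp (s * real (card {l \<in> J. x l \<in> A}))) = (\<Prod>l\<in>J. ennreal (exp (s * indicator A (x l))))"
    for x :: "'i \<Rightarrow> 'a"
  proof -
    have "real (card {l \<in> J. x l \<in> A}) = (\<Sum>l\<in>J. indicator A (x l))"
      using assms(1) by (simp add: indicator_def sum.If_cases Int_def)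
    then have "exp (s * real (card {l \<in> J. x l \<in> A})) = (\<Prod>l\<in>J. exp (s * indicator A (x l)))"
      using assms(1) by (simp only: sum_distrib_left exp_sum)
    then show ?thesis
      by (simp add: prod_ennreal)
  qed
  then have "(\<integral>\<^sup>+x. ennreal (exp (s * real (card {l \<in> J. x l \<in> A}))) \<partial>sample J) =
      (\<integral>\<^sup>+x. (\<Prod>l\<in>J. ennreal (exp (s * indicator A (x l)))) \<partial>sample J)"
    by simp
  also have "\<dots> = (\<Prod>l\<in>J. \<integral>\<^sup>+z. ennreal (exp (s * indicator A z)) \<partial>M)"
    using assms(1,2) by (subst product_nn_integral_prod) (auto simp: sets_M)
  also have "\<dots> = ennreal ((1 + (exp s - 1) * measure M A) ^ card J)"
    using assms(2,3) by (simp add: nn_integral_exp_indicator ennreal_power[symmetric])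
  finally show ?thesis .
qed

lemma emeasure_many_in_set:
  fixes J :: "'i set"
  assumes "finite J" "A \<in> sets borel" "measure M A \<le> p" "0 \<le> s"
  shows "emeasure (sample J) {x \<in> space (sample J). T \<le> real (card {l \<in> J. x l \<in> A})}
    \<le> ennreal (exp ((exp s - 1) * p * card J - s * T))"
proof -
  define S where "S x = real (card {l \<in> J. x l \<in> A})" for x :: "'i \<Rightarrow> 'a"
  have [measurable]: "S \<in> borel_measurable (sample J)"
    unfolding S_def using assms(1,2) by (intro borel_measurable_card_Collect) auto
  define c where "c = 1 + (exp s - 1) * measure M A"
  have "(exp s - 1) * measure M A \<le> (exp s - 1) * p"
    using assms(3,4) by (intro mult_left_mono) auto
  then have c: "0 \<le> c" "c \<le> exp ((exp s - 1) * p)"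
    unfolding c_def using assms(4) exp_ge_add_one_self[of "(exp s - 1) * p"] by (simp, linarith)
  have "emeasure (sample J) {x \<in> space (sample J). T \<le> S x} =
      (\<integral>\<^sup>+x. indicator {x \<in> space (sample J). T \<le> S x} x \<partial>sample J)"
    by simp
  also have "\<dots> \<le> (\<integral>\<^sup>+x. ennreal (exp (- s * T)) * ennreal (exp (s * S x)) \<partial>sample J)"
  proof (intro nn_integral_mono)
    fix x
    have "T \<le> S x \<Longrightarrow> 1 \<le> exp (- s * T) * exp (s * S x)"
      using assms(4) mult_left_mono[of T "S x" s] by (simp add: mult_exp_exp mult.commute)
    then show "indicator {x \<in> space (sample J). T \<le> S x} x \<le> ennreal (exp (- s * T)) * ennreal (exp (s * S x))"
      by (auto simp: indicator_def ennreal_mult[symmetric])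
  qed
  also have "\<dots> = ennreal (exp (- s * T)) * ennreal (c ^ card J)"
    using nn_integral_exp_card[OF assms(1,2,4), folded S_def c_def] by (simp add: nn_integral_cmult)
  also have "\<dots> \<le> ennreal (exp (- s * T) * exp ((exp s - 1) * p) ^ card J)"
    using c by (simp add: ennreal_mult[symmetric]) (intro ennreal_leI mult_left_mono power_mono; simp)
  also have "\<dots> = ennreal (exp ((exp s - 1) * p * card J - s * T))"
    by (simp add: exp_of_nat_mult[symmetric] exp_add[symmetric] algebra_simps)
  finally show ?thesis
    unfolding S_def .
qed

lemma measure_many_in_cball:
  assumes "finite I" "i \<in> I" "0 \<le> s" "\<And>y. measure M (cball y R) \<le> p"
  shows "measure (sample I) {\<omega> \<in> space (sample I). T \<le> real (card {l \<in> I - {i}. \<omega> l \<in> cball (\<omega> i) R})}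
    \<le> exp ((exp s - 1) * p * (card I - 1) - s * T)"
proof -
  have [measurable]: "(\<lambda>\<omega>. real (card {l \<in> I - {i}. \<omega> l \<in> cball (\<omega> i) R})) \<in> borel_measurable (sample I)"
    using assms(1,2) by (intro borel_measurable_card_in_cball) auto
  have "Measurable.pred (sample I) (\<lambda>\<omega>. T \<le> real (card {l \<in> I - {i}. \<omega> l \<in> cball (\<omega> i) R}))"
    by measurable
  note pick = emeasure_sample_pick[OF assms(1,2) this]
  have count_upd: "{l \<in> I - {i}. (x(i := y)) l \<in> cball ((x(i := y)) i) R} = {l \<in> I - {i}. x l \<in> cball y R}"
    for x y by auto
  have "emeasure (sample I) {\<omega> \<in> space (sample I). T \<le> real (card {l \<in> I - {i}. \<omega> l \<in> cball (\<omega> i) R})} =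
      (\<integral>\<^sup>+y. emeasure (sample (I - {i}))
        {x \<in> space (sample (I - {i})). T \<le> real (card {l \<in> I - {i}. x l \<in> cball y R})} \<partial>M)"
    by (simp only: pick count_upd)
  also have "\<dots> \<le> (\<integral>\<^sup>+y. ennreal (exp ((exp s - 1) * p * card (I - {i}) - s * T)) \<partial>M)"
    using assms by (intro nn_integral_mono emeasure_many_in_set) auto
  finally show ?thesis
    using assms(1,2) unfolding measure_def by (intro enn2real_leI) (simp_all add: emeasure_space_1)
qed

lemma emeasure_many_in_lens_around:
  fixes J :: "'i set"
  assumes "finite J" "j \<in> J" "0 \<le> s"
    and lens: "\<And>z. t \<le> dist y z \<Longrightarrow> measure M (cball y R \<inter> cball z R) \<le> q"
    and near: "measure M (cball y (2 * R)) \<le> q'"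
  shows "emeasure (sample J) {x \<in> space (sample J). t \<le> dist y (x j) \<and> dist y (x j) \<le> 2 * R \<and>
      T \<le> real (card {l \<in> J - {j}. x l \<in> cball y R \<inter> cball (x j) R})}
    \<le> ennreal (q' * exp ((exp s - 1) * q * card (J - {j}) - s * T))"
proof -
  define E where "E = exp ((exp s - 1) * q * card (J - {j}) - s * T)"
  define Q where "Q z x \<longleftrightarrow> t \<le> dist y z \<and> dist y z \<le> 2 * R \<and>
    T \<le> real (card {l \<in> J - {j}. x l \<in> cball y R \<inter> cball z R})" for z and x :: "'i \<Rightarrow> 'a"
  have [measurable]: "(\<lambda>x. real (card {l \<in> J - {j}. x l \<in> cball y R \<inter> cball (x j) R})) \<in> borel_measurable (sample J)"
    using assms(1,2) unfolding Int_iff mem_cball by (intro borel_measurable_card_Collect) auto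
  have "Measurable.pred (sample J) (\<lambda>x. Q (x j) x)"
    unfolding Q_def using assms(2) by measurable
  moreover have "Q z (x(j := z)) = Q z x" for x z
  proof -
    have "{l \<in> J - {j}. (x(j := z)) l \<in> cball y R \<inter> cball z R} = {l \<in> J - {j}. x l \<in> cball y R \<inter> cball z R}"
      by auto
    then show ?thesis
      unfolding Q_def by (simp only:)
  qed
  ultimately have "emeasure (sample J) {x \<in> space (sample J). Q (x j) x} =
      (\<integral>\<^sup>+z. emeasure (sample (J - {j})) {x \<in> space (sample (J - {j})). Q z x} \<partial>M)"
    using emeasure_sample_pick[OF assms(1,2)] by simp
  also have "\<dots> \<le> (\<integral>\<^sup>+z. ennreal E * indicator (cball y (2 * R)) z \<partial>M)"
  proof (intro nn_integral_mono)
    fix z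
    show "emeasure (sample (J - {j})) {x \<in> space (sample (J - {j})). Q z x} \<le> ennreal E * indicator (cball y (2 * R)) z"
    proof (cases "t \<le> dist y z \<and> dist y z \<le> 2 * R")
      case True
      then show ?thesis
        using assms(1,3) lens[of z] emeasure_many_in_set[of "J - {j}" "cball y R \<inter> cball z R" q s T]
        by (simp add: Q_def E_def mem_cball)
    qed (auto simp: Q_def)
  qed
  also have "\<dots> = ennreal E * emeasure M (cball y (2 * R))"
    by (simp add: nn_integral_cmult_indicator sets_M)
  also have "\<dots> = ennreal (measure M (cball y (2 * R)) * E)"
    by (simp add: emeasure_eq_measure E_def ennreal_mult[symmetric] mult.commute)
  also have "\<dots> \<le> ennreal (q' * E)"
    using near by (intro ennreal_leI mult_right_mono) (auto simp: E_def)
  finally show ?thesis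
    by (simp add: Q_def E_def)
qed

lemma measure_many_in_lens:
  fixes I :: "'i set"
  assumes "finite I" "i \<in> I" "j \<in> I" "i \<noteq> j" "0 \<le> s"
    and lens: "\<And>y z. t \<le> dist y z \<Longrightarrow> measure M (cball y R \<inter> cball z R) \<le> q"
    and near: "\<And>y. measure M (cball y (2 * R)) \<le> q'"
  shows "measure (sample I) {\<omega> \<in> space (sample I). t \<le> dist (\<omega> i) (\<omega> j) \<and> dist (\<omega> i) (\<omega> j) \<le> 2 * R \<and>
      T \<le> real (card {l \<in> I - {i, j}. \<omega> l \<in> cball (\<omega> i) R \<inter> cball (\<omega> j) R})}
    \<le> q' * exp ((exp s - 1) * q * (card I - 2) - s * T)"
proof -
  have I: "I - {i, j} = I - {i} - {j}" "card (I - {i} - {j}) = card I - 2"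
    using assms(1-4) by (auto simp: card_Diff_subset)
  have q': "0 \<le> q'"
    using near[of undefined] measure_nonneg[of M] by (rule order_trans[rotated])
  define Q where "Q y z x \<longleftrightarrow> t \<le> dist y z \<and> dist y z \<le> 2 * R \<and>
    T \<le> real (card {l \<in> I - {i} - {j}. x l \<in> cball y R \<inter> cball z R})" for y z and x :: "'i \<Rightarrow> 'a"
  have [measurable]: "(\<lambda>\<omega>. real (card {l \<in> I - {i} - {j}. \<omega> l \<in> cball (\<omega> i) R \<inter> cball (\<omega> j) R}))
      \<in> borel_measurable (sample I)"
    using assms(1-3) by (intro borel_measurable_card_in_lens) auto
  have "Measurable.pred (sample I) (\<lambda>\<omega>. Q (\<omega> i) (\<omega> j) \<omega>)"
    unfolding Q_def using assms(2,3) by measurable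
  moreover have "Q y (x j) (x(i := y)) = Q y (x j) x" for x y
  proof -
    have "{l \<in> I - {i} - {j}. (x(i := y)) l \<in> cball y R \<inter> cball (x j) R} =
        {l \<in> I - {i} - {j}. x l \<in> cball y R \<inter> cball (x j) R}"
      by auto
    then show ?thesis
      unfolding Q_def by (simp only:)
  qed
  ultimately have "emeasure (sample I) {\<omega> \<in> space (sample I). Q (\<omega> i) (\<omega> j) \<omega>} =
      (\<integral>\<^sup>+y. emeasure (sample (I - {i})) {x \<in> space (sample (I - {i})). Q y (x j) x} \<partial>M)"
    using emeasure_sample_pick[OF assms(1,2)] assms(4) by simp
  also have "\<dots> \<le> (\<integral>\<^sup>+y. ennreal (q' * exp ((exp s - 1) * q * card (I - {i} - {j}) - s * T)) \<partial>M)"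
    unfolding Q_def using assms lens near by (intro nn_integral_mono emeasure_many_in_lens_around) auto
  finally show ?thesis
    using q' I unfolding Q_def measure_def by (intro enn2real_leI) (simp_all add: emeasure_space_1)
qed

lemma emeasure_sample_coordinate:
  assumes "i \<in> I" "A \<in> sets borel"
  shows "emeasure (sample I) {x \<in> space (sample I). x i \<in> A} = emeasure M A"
proof -
  interpret product_prob_space "\<lambda>_. M" I
    by (simp add: product_prob_spaceI prob_space_axioms)
  show ?thesis
    using assms by (simp add: emeasure_PiM_Collect_single sets_M)
qed

lemma measure_close_pair:
  assumes "finite I" "i \<in> I" "j \<in> I" "i \<noteq> j" "\<And>y. measure M (ball y t) \<le> q"
  shows "measure (sample I) {\<omega> \<in> space (sample I). dist (\<omega> i) (\<omega> j) < t} \<le> q"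
proof -
  have q: "0 \<le> q"
    using assms(5)[of undefined] measure_nonneg[of M] by (rule order_trans[rotated])
  have "emeasure (sample I) {\<omega> \<in> space (sample I). dist (\<omega> i) (\<omega> j) < t} =
      (\<integral>\<^sup>+y. emeasure (sample (I - {i})) {x \<in> space (sample (I - {i})). x j \<in> ball y t} \<partial>M)"
    using assms(1-4) by (subst emeasure_sample_pick[of I i]) (auto simp: mem_ball)
  also have "\<dots> = (\<integral>\<^sup>+y. emeasure M (ball y t) \<partial>M)"
    using assms(3,4) by (intro nn_integral_cong emeasure_sample_coordinate) auto
  also have "\<dots> \<le> (\<integral>\<^sup>+y. ennreal q \<partial>M)"
    using assms(5) by (intro nn_integral_mono) (simp add: emeasure_eq_measure ennreal_leI)
  finally show ?thesis
    using q unfolding measure_def by (intro enn2real_leI) (simp_all add: emeasure_space_1)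
qed

end

locale ball_graph_deletion =
  fixes C :: "'a::euclidean_space set" and r t D D\<^sub>2 :: real
  assumes t_pos: "0 < t"
begin

definition high_degree :: "'i set \<Rightarrow> ('i \<Rightarrow> 'a) \<Rightarrow> 'i \<Rightarrow> bool" where
  "high_degree I \<omega> i \<longleftrightarrow> D \<le> real (card {l \<in> I - {i}. \<omega> l \<in> cball (\<omega> i) (2 * r)})"

definition high_codegree :: "'i set \<Rightarrow> ('i \<Rightarrow> 'a) \<Rightarrow> 'i \<Rightarrow> 'i \<Rightarrow> bool" where
  "high_codegree I \<omega> i j \<longleftrightarrow> t \<le> dist (\<omega> i) (\<omega> j) \<and> dist (\<omega> i) (\<omega> j) \<le> 2 * (2 * r) \<and>
    D\<^sub>2 \<le> real (card {l \<in> I - {i, j}. \<omega> l \<in> cball (\<omega> i) (2 * r) \<inter> cball (\<omega> j) (2 * r)})"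

definition bad :: "'i set \<Rightarrow> ('i \<Rightarrow> 'a) \<Rightarrow> 'i \<Rightarrow> bool" where
  "bad I \<omega> i \<longleftrightarrow> \<omega> i \<notin> C \<or> (\<exists>j\<in>I - {i}. dist (\<omega> i) (\<omega> j) < t) \<or>
    high_degree I \<omega> i \<or> (\<exists>j\<in>I - {i}. high_codegree I \<omega> i j)"

lemma good_points_separated:
  assumes "i \<in> I" "\<not> bad I \<omega> i" "j \<in> I" "j \<noteq> i"
  shows "t \<le> dist (\<omega> i) (\<omega> j)"
  using assms by (auto simp: bad_def not_less)

lemma inj_on_good_points: "inj_on \<omega> {i \<in> I. \<not> bad I \<omega> i}"
proof (rule inj_onI)
  fix i j assume "i \<in> {i \<in> I. \<not> bad I \<omega> i}" "j \<in> {i \<in> I. \<not> bad I \<omega> i}" "\<omega> i = \<omega> j"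
  then show "i = j"
    using good_points_separated[of i I \<omega> j] t_pos by fastforce
qed

lemma max_degree_good_points_le:
  assumes "finite I" "0 \<le> D"
  shows "real (max_degree (\<omega> ` {i \<in> I. \<not> bad I \<omega> i}) r) \<le> D"
proof (rule max_degree_le)
  fix x assume "x \<in> \<omega> ` {i \<in> I. \<not> bad I \<omega> i}"
  then obtain i where i: "i \<in> I" "\<not> bad I \<omega> i" "x = \<omega> i"
    by auto
  have "card (ball_graph_nbrs (\<omega> ` {i \<in> I. \<not> bad I \<omega> i}) r x) \<le> card {l \<in> I - {i}. \<omega> l \<in> cball (\<omega> i) (2 * r)}"
    unfolding i(3) using assms(1) by (rule card_ball_graph_nbrs_image_le) auto
  moreover have "real (card {l \<in> I - {i}. \<omega> l \<in> cball (\<omega> i) (2 * r)}) < D"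
    using i(2) by (auto simp: bad_def high_degree_def)
  ultimately show "real (card (ball_graph_nbrs (\<omega> ` {i \<in> I. \<not> bad I \<omega> i}) r x)) \<le> D"
    by linarith
qed (use assms in auto)

lemma max_codegree_good_points_le:
  assumes "finite I" "0 \<le> D\<^sub>2"
  shows "real (max_codegree (\<omega> ` {i \<in> I. \<not> bad I \<omega> i}) r) \<le> D\<^sub>2"
proof (rule max_codegree_le)
  let ?X = "\<omega> ` {i \<in> I. \<not> bad I \<omega> i}"
  fix x y assume "x \<in> ?X" "y \<in> ?X" "x \<noteq> y"
  then obtain i j where ij: "i \<in> I" "\<not> bad I \<omega> i" "j \<in> I" "x = \<omega> i" "y = \<omega> j" "i \<noteq> j"
    by auto
  show "real (card (ball_graph_nbrs ?X r x \<inter> ball_graph_nbrs ?X r y)) \<le> D\<^sub>2"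
  proof (cases "dist x y \<le> 4 * r")
    case True
    have "card (ball_graph_nbrs ?X r x \<inter> ball_graph_nbrs ?X r y) \<le>
        card {l \<in> I - {i, j}. \<omega> l \<in> cball (\<omega> i) (2 * r) \<inter> cball (\<omega> j) (2 * r)}"
      unfolding ij(4,5) using assms(1) by (rule card_common_ball_graph_nbrs_image_le) auto
    moreover have "real (card {l \<in> I - {i, j}. \<omega> l \<in> cball (\<omega> i) (2 * r) \<inter> cball (\<omega> j) (2 * r)}) < D\<^sub>2"
      using ij True good_points_separated[of i I \<omega> j] by (auto simp: bad_def high_codegree_def)
    ultimately show ?thesis
      by linarith
  qed (simp add: ball_graph_nbrs_disjoint assms(2))
qed (use assms in auto)

end

locale random_ball_graph_deletion = ball_graph_deletion C r t D D\<^sub>2 + iid_points M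
  for C :: "'a::euclidean_space set" and r t D D\<^sub>2 :: real and M :: "'a measure" +
  assumes C_borel [measurable]: "C \<in> sets borel" and C_ae: "emeasure M (- C) = 0"
begin

lemma pred_high_degree:
  assumes "finite I" "i \<in> I"
  shows "Measurable.pred (sample I) (\<lambda>\<omega>. high_degree I \<omega> i)"
proof -
  have [measurable]: "(\<lambda>\<omega>. real (card {l \<in> I - {i}. \<omega> l \<in> cball (\<omega> i) (2 * r)})) \<in> borel_measurable (sample I)"
    using assms by (intro borel_measurable_card_in_cball) auto
  show ?thesis
    unfolding high_degree_def by measurable
qed

lemma pred_high_codegree:
  assumes "finite I" "i \<in> I" "j \<in> I"
  shows "Measurable.pred (sample I) (\<lambda>\<omega>. high_codegree I \<omega> i j)"
proof -
  have [measurable]: "(\<lambda>\<omega>. real (card {l \<in> I - {i, j}. \<omega> l \<in> cball (\<omega> i) (2 * r) \<inter> cball (\<omega> j) (2 * r)}))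
      \<in> borel_measurable (sample I)"
    using assms by (intro borel_measurable_card_in_lens) auto
  show ?thesis
    unfolding high_codegree_def using assms(2,3) by measurable
qed

lemma pred_bad:
  assumes "finite I" "i \<in> I"
  shows "Measurable.pred (sample I) (\<lambda>\<omega>. bad I \<omega> i)"
proof -
  have [measurable]: "Measurable.pred (sample I) (\<lambda>\<omega>. high_degree I \<omega> i)"
    using assms by (rule pred_high_degree)
  have [measurable]: "Measurable.pred (sample I) (\<lambda>\<omega>. high_codegree I \<omega> i j)" if "j \<in> I - {i}" for j
    using assms that by (intro pred_high_codegree) auto
  have [measurable]: "(\<lambda>\<omega>. \<omega> j) \<in> measurable (sample I) M" if "j \<in> I - {i}" for j
    using that by (intro measurable_component_singleton) simp
  have "finite (I - {i})"
    using assms(1) by simp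
  then show ?thesis
    unfolding bad_def using assms(2)
    by (intro pred_intros_logic pred_intros_finite; measurable)
qed

lemma prob_bad_union_bound:
  fixes I :: "'i set"
  assumes "finite I" "i \<in> I"
  defines "E \<equiv> \<lambda>Q. {\<omega> \<in> space (sample I). Q \<omega>}"
  shows "measure (sample I) (E (\<lambda>\<omega>. bad I \<omega> i)) \<le> measure (sample I) (E (\<lambda>\<omega>. \<omega> i \<notin> C)) +
    (\<Sum>j\<in>I - {i}. measure (sample I) (E (\<lambda>\<omega>. dist (\<omega> i) (\<omega> j) < t))) +
    measure (sample I) (E (\<lambda>\<omega>. high_degree I \<omega> i)) +
    (\<Sum>j\<in>I - {i}. measure (sample I) (E (\<lambda>\<omega>. high_codegree I \<omega> i j)))"
proof -
  let ?P = "measure (sample I)"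
  let ?out = "E (\<lambda>\<omega>. \<omega> i \<notin> C)" and ?close = "\<lambda>j. E (\<lambda>\<omega>. dist (\<omega> i) (\<omega> j) < t)"
    and ?deg = "E (\<lambda>\<omega>. high_degree I \<omega> i)" and ?codeg = "\<lambda>j. E (\<lambda>\<omega>. high_codegree I \<omega> i j)"
  let ?closes = "\<Union>j\<in>I - {i}. ?close j" and ?codegs = "\<Union>j\<in>I - {i}. ?codeg j"
  have out_ev: "?out \<in> sets (sample I)" and close_ev: "\<And>j. j \<in> I \<Longrightarrow> ?close j \<in> sets (sample I)"
    unfolding E_def using assms(2) by measurable
  have deg_ev: "?deg \<in> sets (sample I)" and codeg_ev: "\<And>j. j \<in> I \<Longrightarrow> ?codeg j \<in> sets (sample I)"
    unfolding E_def using pred_high_degree[OF assms(1,2)] pred_high_codegree[OF assms(1,2)]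
    by (simp_all add: pred_def)
  have unions: "?closes \<in> sets (sample I)" "?codegs \<in> sets (sample I)"
    using assms(1) close_ev codeg_ev by auto
  have bad_eq: "E (\<lambda>\<omega>. bad I \<omega> i) = ?out \<union> ?closes \<union> ?deg \<union> ?codegs"
    by (auto simp: E_def bad_def)
  have "?P (?out \<union> ?closes \<union> ?deg \<union> ?codegs) \<le> ?P (?out \<union> ?closes \<union> ?deg) + ?P ?codegs"
    "?P (?out \<union> ?closes \<union> ?deg) \<le> ?P (?out \<union> ?closes) + ?P ?deg" "?P (?out \<union> ?closes) \<le> ?P ?out + ?P ?closes"
    using out_ev deg_ev unions by (intro measure_Un_le sets.Un; simp)+
  moreover have "?P ?closes \<le> (\<Sum>j\<in>I - {i}. ?P (?close j))" "?P ?codegs \<le> (\<Sum>j\<in>I - {i}. ?P (?codeg j))"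
    using assms(1) close_ev codeg_ev by (auto intro!: measure_UNION_le)
  ultimately show ?thesis
    unfolding bad_eq by linarith
qed

lemma prob_bad_le:
  fixes I :: "'i set" and s s' q\<^sub>0 p q q' :: real
  assumes "finite I" "i \<in> I" "0 \<le> s" "0 \<le> s'"
    and close: "\<And>y. measure M (ball y t) \<le> q\<^sub>0"
    and ball: "\<And>y. measure M (cball y (2 * r)) \<le> p"
    and lens: "\<And>y z. t \<le> dist y z \<Longrightarrow> measure M (cball y (2 * r) \<inter> cball z (2 * r)) \<le> q"
    and near: "\<And>y. measure M (cball y (4 * r)) \<le> q'"
  shows "measure (sample I) {\<omega> \<in> space (sample I). bad I \<omega> i} \<le>
    (card I - 1) * q\<^sub>0 + exp ((exp s - 1) * p * (card I - 1) - s * D) +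
    (card I - 1) * (q' * exp ((exp s' - 1) * q * (card I - 2) - s' * D\<^sub>2))"
proof -
  let ?P = "measure (sample I)" and ?ev = "\<lambda>Q. {\<omega> \<in> space (sample I). Q \<omega>}"
  have "?P (?ev (\<lambda>\<omega>. \<omega> i \<notin> C)) = 0"
    using emeasure_sample_coordinate[OF assms(2), of "- C"] C_ae by (simp add: measure_def)
  moreover have "(\<Sum>j\<in>I - {i}. ?P (?ev (\<lambda>\<omega>. dist (\<omega> i) (\<omega> j) < t))) \<le> (\<Sum>j\<in>I - {i}. q\<^sub>0)"
    using measure_close_pair[OF assms(1,2) _ _ close] by (intro sum_mono) blast
  moreover have "?P (?ev (\<lambda>\<omega>. high_degree I \<omega> i)) \<le> exp ((exp s - 1) * p * (card I - 1) - s * D)"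
    unfolding high_degree_def by (rule measure_many_in_cball[OF assms(1-3) ball])
  moreover have "(\<Sum>j\<in>I - {i}. ?P (?ev (\<lambda>\<omega>. high_codegree I \<omega> i j))) \<le>
      (\<Sum>j\<in>I - {i}. q' * exp ((exp s' - 1) * q * (card I - 2) - s' * D\<^sub>2))"
  proof (intro sum_mono)
    fix j assume "j \<in> I - {i}"
    moreover have "measure M (cball y (2 * (2 * r))) \<le> q'" for y
      using near[of y] by simp
    ultimately show "?P (?ev (\<lambda>\<omega>. high_codegree I \<omega> i j)) \<le> q' * exp ((exp s' - 1) * q * (card I - 2) - s' * D\<^sub>2)"
      unfolding high_codegree_def using measure_many_in_lens[OF assms(1,2) _ _ assms(4) lens] by blast
  qed
  ultimately show ?thesis
    using prob_bad_union_bound[OF assms(1,2)] assms(1,2) by (simp add: card_Diff_singleton)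
qed

lemma exists_sparse_subset:
  fixes I :: "'i set" and s s' q\<^sub>0 p q q' \<epsilon> :: real
  assumes "finite I" "0 \<le> s" "0 \<le> s'" "0 \<le> D" "0 \<le> D\<^sub>2"
    and "\<And>y. measure M (ball y t) \<le> q\<^sub>0"
    and "\<And>y. measure M (cball y (2 * r)) \<le> p"
    and "\<And>y z. t \<le> dist y z \<Longrightarrow> measure M (cball y (2 * r) \<inter> cball z (2 * r)) \<le> q"
    and "\<And>y. measure M (cball y (4 * r)) \<le> q'"
    and budget: "(card I - 1) * q\<^sub>0 + exp ((exp s - 1) * p * (card I - 1) - s * D) +
      (card I - 1) * (q' * exp ((exp s' - 1) * q * (card I - 2) - s' * D\<^sub>2)) \<le> \<epsilon>"
  shows "\<exists>X \<subseteq> C. finite X \<and> card I * (1 - \<epsilon>) \<le> card X \<and>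
    real (max_degree X r) \<le> D \<and> real (max_codegree X r) \<le> D\<^sub>2"
proof -
  interpret P: prob_space "sample I"
    by (rule prob_space_sample)
  obtain \<omega> where "real (card {i \<in> I. bad I \<omega> i}) \<le> (\<Sum>i\<in>I. P.prob {\<omega> \<in> space (sample I). bad I \<omega> i})"
    using P.exists_card_le_sum_prob[OF assms(1), of "\<lambda>i \<omega>. bad I \<omega> i"] pred_bad[OF assms(1), unfolded pred_def]
    by blast
  also have "\<dots> \<le> (\<Sum>i\<in>I. \<epsilon>)"
    using prob_bad_le[OF assms(1) _ assms(2,3,6-9)] budget by (intro sum_mono) force
  finally have few_bad: "real (card {i \<in> I. bad I \<omega> i}) \<le> card I * \<epsilon>"
    by simp
  define X where "X = \<omega> ` {i \<in> I. \<not> bad I \<omega> i}"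
  have "card X = card (I - {i \<in> I. bad I \<omega> i})"
    unfolding X_def by (subst card_image[OF inj_on_good_points]) (auto intro: arg_cong[where f=card])
  also have "\<dots> = card I - card {i \<in> I. bad I \<omega> i}"
    using assms(1) by (intro card_Diff_subset) auto
  finally have "card X = card I - card {i \<in> I. bad I \<omega> i}" .
  then have "card I * (1 - \<epsilon>) \<le> card X"
    using few_bad assms(1) by (simp add: card_mono of_nat_diff algebra_simps)
  moreover have "X \<subseteq> C" "finite X"
    using assms(1) by (auto simp: X_def bad_def)
  ultimately show ?thesis
    using max_degree_good_points_le[OF assms(1,4)] max_codegree_good_points_le[OF assms(1,5)]
    unfolding X_def by blast
qed

end

definition target_degree :: "nat \<Rightarrow> real" where
  "target_degree n = (sqrt n / (4 * ln n)) ^ n"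

lemma target_degree_nonneg: "0 \<le> target_degree n"
  unfolding target_degree_def by (cases n) simp_all

lemma exp_neg_le_inverse:
  fixes x :: real
  assumes "0 < x"
  shows "exp (- x) \<le> 1 / x"
proof -
  have "x \<le> exp x"
    using exp_ge_add_one_self[of x] by linarith
  then show ?thesis
    using assms divide_left_mono[of x "exp x" 1] by (simp add: exp_minus inverse_eq_divide)
qed

lemma cube_le_power_109: "1000 \<le> n \<Longrightarrow> 96 * real n ^ 3 \<le> (109 / 100) ^ n"
proof (induction n rule: dec_induct)
  case base
  have "(2::real) ^ 100 \<le> ((109 / 100) ^ 10) ^ 100"
    by (intro power_mono) (simp_all add: power_numeral_reduce)
  then show ?case
    by (simp add: power_mult[symmetric])
next
  case (step m)
  then have m: "1000 \<le> real m"
    by simp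
  then have "1000 * real m \<le> real m ^ 2" "1000 * real m ^ 2 \<le> real m ^ 3"
    by (simp_all add: power2_eq_square power3_eq_cube)
  moreover have "real (Suc m) ^ 3 = real m ^ 3 + 3 * real m ^ 2 + 3 * real m + 1"
    by (simp add: power3_eq_cube power2_eq_square algebra_simps)
  ultimately have "96 * real (Suc m) ^ 3 \<le> 109 / 100 * (109 / 100) ^ m"
    using m step.IH by linarith
  then show ?case
    by simp
qed

lemma ln_le_sqrt:
  fixes d :: real
  assumes "1000 \<le> d"
  shows "44 / 10 * ln d \<le> sqrt d"
proof -
  define s where "s = sqrt d"
  have s: "316 / 10 \<le> s"
    unfolding s_def using assms by (intro real_le_rsqrt) (simp add: power2_eq_square)
  have "ln d = 2 * ln s"
    using s assms by (simp add: s_def ln_sqrt)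
  also have "ln s = ln 32 + ln (s / 32)"
    using s by (simp add: ln_div)
  also have "ln (s / 32) \<le> s / 32 - 1"
    using s by (intro ln_le_minus_one) simp
  also have "ln (32::real) = 5 * ln 2"
    using ln_realpow[of 2 5] by simp
  also have "ln (2::real) \<le> 25 / 36"
    by (rule ln2_le_25_over_36)
  finally show ?thesis
    using s unfolding s_def by simp
qed

lemma ln_bounds:
  assumes "1000 \<le> n"
  shows "8 / 3 \<le> ln (real n)" "(ln (real n))\<^sup>2 \<le> 25 * real n / 484"
proof -
  have "ln (16::real) \<le> ln (real n)"
    using assms by simp
  moreover have "ln (16::real) = 4 * ln 2"
    using ln_realpow[of 2 4] by simp
  ultimately show ln: "8 / 3 \<le> ln (real n)"
    using ln2_ge_two_thirds by linarith
  have "(44 / 10 * ln (real n))\<^sup>2 \<le> (sqrt (real n))\<^sup>2"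
    using ln_le_sqrt[of "real n"] assms ln by (intro power_mono) auto
  then show "(ln (real n))\<^sup>2 \<le> 25 * real n / 484"
    by (simp add: power_mult_distrib power_divide)
qed

lemma target_degree_ge:
  assumes "1000 \<le> n"
  shows "96 * real n ^ 3 * exp ((ln (real n))\<^sup>2 / 8) \<le> target_degree n"
proof -
  have "exp ((ln (real n))\<^sup>2 / 8) \<le> exp (1 / 154) ^ n"
    using ln_bounds(2)[OF assms] by (simp add: exp_of_nat_mult[symmetric])
  also have "\<dots> \<le> (10066 / 10000) ^ n"
    using exp_bound[of "1 / 154"] by (intro power_mono) (simp_all add: power2_eq_square)
  finally have "96 * real n ^ 3 * exp ((ln (real n))\<^sup>2 / 8) \<le> (109 / 100) ^ n * (10066 / 10000) ^ n"
    using cube_le_power_109[OF assms] by (intro mult_mono) auto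
  also have "\<dots> \<le> (11 / 10) ^ n"
    unfolding power_mult_distrib[symmetric] by (intro power_mono) auto
  also have "\<dots> \<le> target_degree n"
    unfolding target_degree_def using ln_le_sqrt[of "real n"] assms ln_bounds(1)[OF assms]
    by (intro power_mono) (auto simp: field_simps)
  finally show ?thesis .
qed

lemma cube_le_target_degree:
  assumes "1000 \<le> n"
  shows "96 * real n ^ 3 \<le> target_degree n * exp (- (ln (real n))\<^sup>2 / 8)"
    and "96 * real n ^ 3 \<le> target_degree n"
proof -
  show *: "96 * real n ^ 3 \<le> target_degree n * exp (- (ln (real n))\<^sup>2 / 8)"
    using target_degree_ge[OF assms] by (simp add: exp_minus field_simps)
  have "target_degree n * exp (- (ln (real n))\<^sup>2 / 8) \<le> target_degree n * 1"
    using target_degree_nonneg by (intro mult_left_mono) auto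
  with * show "96 * real n ^ 3 \<le> target_degree n"
    by linarith
qed

lemma target_degree_pos: "1000 \<le> n \<Longrightarrow> 0 < target_degree n"
  using cube_le_target_degree(2)[of n] by (simp add: less_le_trans[rotated])

lemma target_degree_le:
  assumes "1000 \<le> n"
  shows "target_degree n \<le> real n ^ n"
proof -
  have ln: "1 \<le> 4 * ln (real n)"
    using ln_bounds(1)[OF assms] by simp
  have "sqrt (real n) \<le> sqrt (real n * real n)"
    using assms by (intro real_sqrt_le_mono) simp
  then have "sqrt (real n) / (4 * ln (real n)) \<le> real n / 1"
    using ln by (intro frac_le) auto
  then show ?thesis
    unfolding target_degree_def using ln by (intro power_mono) auto
qed

lemma six_le_power_two:
  assumes "1000 \<le> n"
  shows "6 * real n \<le> 2 ^ n"
proof -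
  have "real n * 1 \<le> real n * real n ^ 2"
    using assms by (intro mult_left_mono one_le_power) auto
  then have "6 * real n \<le> 96 * real n ^ 3"
    using assms by (simp add: power3_eq_cube power2_eq_square)
  also have "\<dots> \<le> (109 / 100) ^ n"
    using cube_le_power_109[OF assms] .
  also have "\<dots> \<le> 2 ^ n"
    by (intro power_mono) auto
  finally show ?thesis .
qed

lemma target_degree_mult_le_exp:
  assumes "1000 \<le> n"
  shows "target_degree n * 2 ^ n * (6 * real n) \<le> exp (96 * real n ^ 3)"
proof -
  have "2 ^ n \<le> real n ^ n"
    using assms by (intro power_mono) auto
  moreover have "6 * real n \<le> real n ^ n"
    using six_le_power_two[OF assms] \<open>2 ^ n \<le> real n ^ n\<close> by linarith
  ultimately have "target_degree n * 2 ^ n * (6 * real n) \<le> real n ^ n * real n ^ n * real n ^ n"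
    using target_degree_le[OF assms] target_degree_ge[OF assms]
    by (intro mult_mono) (auto intro: order_trans[rotated])
  also have "\<dots> = exp (ln (real n)) ^ (3 * n)"
    using assms by (simp add: power_add[symmetric])
  also have "\<dots> = exp (3 * real n * ln (real n))"
    by (simp add: exp_of_nat_mult[symmetric] mult.assoc)
  also have "\<dots> \<le> exp (96 * real n ^ 3)"
  proof -
    have "ln (real n) \<le> real n"
      using assms ln_le_minus_one[of "real n"] by simp
    then have "3 * real n * ln (real n) \<le> 3 * real n * real n"
      by (intro mult_left_mono) auto
    also have "\<dots> \<le> 96 * real n ^ 3"
      using assms by (simp add: power3_eq_cube)
    finally show ?thesis
      by simp
  qed
  finally show ?thesis .
qed

text \<open>Here \<open>m\<close> stands for the number \<open>N - 1\<close> of other sample points.\<close>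

context
  fixes n :: nat and V m :: real
  assumes n: "1000 \<le> n" and V: "0 < V"
    and m: "0 \<le> m" "m \<le> target_degree n * (1 - 1 / (2 * real n)) / 2 ^ n * V"
begin

lemma close_pairs_budget: "m * (1 / target_degree n / V) \<le> 1 / (6 * real n)"
proof -
  have "m * (1 / target_degree n / V) \<le> target_degree n * (1 - 1 / (2 * real n)) / 2 ^ n * V * (1 / target_degree n / V)"
    using m(2) V target_degree_pos[OF n] by (intro mult_right_mono) auto
  also have "\<dots> = (1 - 1 / (2 * real n)) / 2 ^ n"
    using V target_degree_pos[OF n] by simp
  also have "\<dots> \<le> 1 / 2 ^ n"
    by (intro divide_right_mono) auto
  also have "\<dots> \<le> 1 / (6 * real n)"
    using six_le_power_two[OF n] n by (intro divide_left_mono) auto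
  finally show ?thesis .
qed

lemma degree_budget:
  "exp ((exp (1 / (4 * real n)) - 1) * (2 ^ n / V) * m - 1 / (4 * real n) * target_degree n) \<le> 1 / (6 * real n)"
proof -
  define s where "s = 1 / (4 * real n)"
  define \<Delta> where "\<Delta> = target_degree n"
  have s: "0 \<le> s" "s \<le> 1" "1 - 1 / (2 * real n) = 1 - 2 * s"
    using n by (auto simp: s_def)
  have \<Delta>: "0 < \<Delta>" "96 * real n ^ 3 \<le> \<Delta>"
    using target_degree_pos[OF n] cube_le_target_degree(2)[OF n] by (simp_all add: \<Delta>_def)
  have "(exp s - 1) * (2 ^ n / V) * m \<le> (s + s\<^sup>2) * (2 ^ n / V * (\<Delta> * (1 - 2 * s) / 2 ^ n * V))"
    using exp_bound[OF s(1,2)] s m V unfolding mult.assoc by (intro mult_mono) (auto simp: \<Delta>_def)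
  also have "2 ^ n / V * (\<Delta> * (1 - 2 * s) / 2 ^ n * V) = \<Delta> * (1 - 2 * s)"
    using V by simp
  also have "(s + s\<^sup>2) * (\<Delta> * (1 - 2 * s)) = s * \<Delta> - \<Delta> * s\<^sup>2 - 2 * \<Delta> * s ^ 3"
    by (simp add: algebra_simps power2_eq_square power3_eq_cube)
  also have "\<dots> \<le> s * \<Delta> - \<Delta> * s\<^sup>2"
    using \<Delta>(1) s(1) by simp
  finally have "exp ((exp s - 1) * (2 ^ n / V) * m - s * \<Delta>) \<le> exp (- (\<Delta> * s\<^sup>2))"
    by simp
  also have "\<dots> \<le> 1 / (\<Delta> * s\<^sup>2)"
    using \<Delta>(1) n by (intro exp_neg_le_inverse) (simp add: s_def)
  also have "\<dots> \<le> 1 / (6 * real n)"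
  proof -
    have "6 * real n * (16 * real n ^ 2) \<le> \<Delta>"
      using \<Delta>(2) by (simp add: power2_eq_square power3_eq_cube)
    then have "6 * real n \<le> \<Delta> * s\<^sup>2"
      using n by (simp add: s_def power2_eq_square field_simps)
    then show ?thesis
      using n by (intro divide_left_mono) auto
  qed
  finally show ?thesis
    by (simp add: s_def \<Delta>_def)
qed

lemma m_le_target_degree_rate: "m \<le> target_degree n / 2 ^ n * V"
proof -
  have "target_degree n * (1 - 1 / (2 * real n)) \<le> target_degree n"
    using target_degree_pos[OF n] by (intro mult_left_le) auto
  then have "target_degree n * (1 - 1 / (2 * real n)) / 2 ^ n * V \<le> target_degree n / 2 ^ n * V"
    using V by (intro mult_right_mono divide_right_mono) auto
  then show ?thesis
    using m(2) by linarith
qed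

lemma codegree_budget:
  fixes m' :: real
  assumes "0 \<le> m'" "m' \<le> m"
  defines "L \<equiv> (ln (real n))\<^sup>2"
  shows "m * (4 ^ n / V * exp ((exp (3 * L / 8) - 1) * (2 ^ n * exp (- L / 2) / V) * m' -
    3 * L / 8 * (target_degree n * exp (- L / 8)))) \<le> 1 / (6 * real n)"
proof -
  define \<Delta> where "\<Delta> = target_degree n"
  define \<tau> where "\<tau> = \<Delta> * exp (- L / 8)"
  have \<Delta>: "0 < \<Delta>" and \<tau>: "96 * real n ^ 3 \<le> \<tau>"
    using target_degree_pos[OF n] cube_le_target_degree(1)[OF n] by (simp_all add: \<Delta>_def \<tau>_def L_def)
  have m_le: "m \<le> \<Delta> / 2 ^ n * V"
    using m_le_target_degree_rate by (simp add: \<Delta>_def)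
  have "(8 / 3)\<^sup>2 \<le> L"
    unfolding L_def using ln_bounds(1)[OF n] by (intro power_mono) auto
  then have L: "1 \<le> 3 * L / 8 - 1"
    by (simp add: power2_eq_square)
  have "(exp (3 * L / 8) - 1) * (2 ^ n * exp (- L / 2) / V) * m' \<le>
      exp (3 * L / 8) * (2 ^ n * exp (- L / 2) / V) * (\<Delta> / 2 ^ n * V)"
    using assms(1,2) m_le V by (intro mult_mono) auto
  also have "\<dots> = \<tau>"
    using V by (simp add: \<tau>_def mult_exp_exp[symmetric]) (simp add: mult_exp_exp)
  finally have "exp ((exp (3 * L / 8) - 1) * (2 ^ n * exp (- L / 2) / V) * m' - 3 * L / 8 * \<tau>) \<le>
      exp (- (\<tau> * (3 * L / 8 - 1)))"
    by (simp add: algebra_simps)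
  also have "\<dots> \<le> exp (- \<tau>)"
    using L \<Delta>(1) by (simp add: \<tau>_def)
  finally have "m * (4 ^ n / V * exp ((exp (3 * L / 8) - 1) * (2 ^ n * exp (- L / 2) / V) * m' - 3 * L / 8 * \<tau>))
      \<le> (\<Delta> / 2 ^ n * V) * (4 ^ n / V * exp (- \<tau>))"
    using m_le m(1) V by (intro mult_mono) auto
  also have "\<dots> = \<Delta> * 2 ^ n * exp (- \<tau>)"
  proof -
    have "(4::real) ^ n = 2 ^ n * 2 ^ n"
      by (simp add: power_mult_distrib[symmetric])
    then show ?thesis
      using V by simp
  qed
  also have "\<dots> \<le> 1 / (6 * real n)"
  proof -
    have "\<Delta> * 2 ^ n * (6 * real n) \<le> exp \<tau>"
      using target_degree_mult_le_exp[OF n] \<tau> unfolding \<Delta>_def by (meson exp_le_cancel_iff order_trans)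
    then show ?thesis
      using n by (simp add: exp_minus field_simps)
  qed
  finally show ?thesis
    by (simp add: \<tau>_def \<Delta>_def)
qed

lemma deletion_budget:
  fixes m' :: real
  assumes "0 \<le> m'" "m' \<le> m"
  defines "L \<equiv> (ln (real n))\<^sup>2"
  shows "m * (1 / target_degree n / V) +
    exp ((exp (1 / (4 * real n)) - 1) * (2 ^ n / V) * m - 1 / (4 * real n) * target_degree n) +
    m * (4 ^ n / V * exp ((exp (3 * L / 8) - 1) * (2 ^ n * exp (- L / 2) / V) * m' -
      3 * L / 8 * (target_degree n * exp (- L / 8)))) \<le> 1 / (2 * real n)"
  using close_pairs_budget degree_budget codegree_budget[OF assms(1,2)] unfolding L_def by simp

end

lemma measure_uniform_measure_lborel_le:
  assumes "C \<in> sets borel" "emeasure lborel C = ennreal V" "0 < V"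
    and "A \<in> sets borel" "emeasure lborel A = ennreal a" "0 \<le> a"
  shows "measure (uniform_measure lborel C) A \<le> a / V"
proof -
  have "measure (uniform_measure lborel C) A = measure lborel (C \<inter> A) / measure lborel C"
    using assms by (intro measure_uniform_measure) auto
  also have "measure lborel C = V"
    using assms(2,3) by (simp add: measure_def)
  also have "measure lborel (C \<inter> A) \<le> a"
    using assms(4-6) emeasure_mono[of "C \<inter> A" A lborel] by (simp add: measure_def enn2real_leI)
  finally show ?thesis
    using assms(3) by (simp add: divide_right_mono)
qed

lemma small_ball_radius_power:
  assumes "0 < r"
  shows "(4 * r * ln (real n) / sqrt (real n) / r) ^ n = 1 / target_degree n"
  using assms by (simp add: target_degree_def power_divide)

lemma lens_radius_power_le:
  assumes "1000 \<le> n" "0 < r"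
  defines "t \<equiv> 4 * r * ln (real n) / sqrt (real n)" and "L \<equiv> (ln (real n))\<^sup>2"
  shows "(sqrt ((2 * r)\<^sup>2 - t\<^sup>2 / 4) / r) ^ n \<le> 2 ^ n * exp (- L / 2)"
proof -
  have L: "0 \<le> L / n" "L / n \<le> 1"
    using ln_bounds(2)[OF assms(1)] assms(1) by (auto simp: L_def field_simps)
  have "(2 * r)\<^sup>2 - t\<^sup>2 / 4 = (2 * r)\<^sup>2 * (1 - L / n)"
    using assms(1) by (simp add: t_def L_def power_divide power_mult_distrib field_simps)
  then have "sqrt ((2 * r)\<^sup>2 - t\<^sup>2 / 4) / r = 2 * sqrt (1 - L / n)"
    using assms(2) by (simp add: real_sqrt_mult)
  moreover have "sqrt (1 - L / n) \<le> exp (- (L / n) / 2)"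
  proof (rule real_le_lsqrt)
    show "1 - L / n \<le> (exp (- (L / n) / 2))\<^sup>2"
      using exp_ge_add_one_self[of "- (L / n)"] by (simp add: power2_eq_square mult_exp_exp)
  qed (use L in auto)
  then have "sqrt (1 - L / n) ^ n \<le> exp (- (L / n) / 2) ^ n"
    using L by (intro power_mono) auto
  moreover have "exp (- (L / n) / 2) ^ n = exp (- L / 2)"
    using assms(1) by (simp add: exp_of_nat_mult[symmetric])
  ultimately show ?thesis
    by (simp add: power_mult_distrib)
qed

lemma measure_uniform_cball_le:
  fixes C :: "'a::euclidean_space set"
  assumes "C \<in> sets borel" "emeasure lborel C = ennreal V" "0 < V" "0 \<le> \<rho>"
  shows "measure (uniform_measure lborel C) (cball x \<rho>) \<le> (\<rho> / unit_vol_radius TYPE('a)) ^ DIM('a) / V"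
  using assms unit_vol_radius_pos[where 'a='a]
  by (intro measure_uniform_measure_lborel_le) (auto simp: emeasure_cball_unit_vol_radius)

lemma measure_uniform_lens_le:
  fixes C :: "'a::euclidean_space set"
  assumes "C \<in> sets borel" "emeasure lborel C = ennreal V" "0 < V"
    and "0 \<le> t" "t \<le> 2 * R" "t \<le> dist y z"
  shows "measure (uniform_measure lborel C) (cball y R \<inter> cball z R) \<le>
    (sqrt (R\<^sup>2 - t\<^sup>2 / 4) / unit_vol_radius TYPE('a)) ^ DIM('a) / V"
proof -
  interpret prob_space "uniform_measure lborel C"
    using assms(2,3) by (intro prob_space_uniform_measure) auto
  have "t\<^sup>2 \<le> (2 * R)\<^sup>2"
    using assms(4,5) by (intro power_mono)
  then have "0 \<le> sqrt (R\<^sup>2 - t\<^sup>2 / 4)"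
    by (simp add: power_mult_distrib)
  have "measure (uniform_measure lborel C) (cball y R \<inter> cball z R) \<le>
      measure (uniform_measure lborel C) (cball (midpoint y z) (sqrt (R\<^sup>2 - t\<^sup>2 / 4)))"
    by (rule finite_measure_mono[OF cball_inter_cball_subset_cball_midpoint[OF assms(4,6)]]) simp
  also have "\<dots> \<le> (sqrt (R\<^sup>2 - t\<^sup>2 / 4) / unit_vol_radius TYPE('a)) ^ DIM('a) / V"
    by (rule measure_uniform_cball_le[OF assms(1-3)]) fact
  finally show ?thesis .
qed

lemma uniform_measure_ball_bounds:
  fixes C :: "'a::euclidean_space set" and y z :: 'a
  assumes "1000 \<le> DIM('a)" "C \<in> sets borel" "emeasure lborel C = ennreal V" "0 < V"
  defines "n \<equiv> DIM('a)" and "r \<equiv> unit_vol_radius TYPE('a)" and "M \<equiv> uniform_measure lborel C"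
  defines "t \<equiv> 4 * r * ln (real n) / sqrt (real n)"
  shows "measure M (ball y t) \<le> 1 / target_degree n / V"
    and "measure M (cball y (2 * r)) \<le> 2 ^ n / V"
    and "measure M (cball y (4 * r)) \<le> 4 ^ n / V"
    and "t \<le> dist y z \<Longrightarrow>
      measure M (cball y (2 * r) \<inter> cball z (2 * r)) \<le> 2 ^ n * exp (- (ln (real n))\<^sup>2 / 2) / V"
proof -
  have r: "0 < r"
    by (simp add: r_def unit_vol_radius_pos)
  have t: "0 \<le> t"
    using r assms(1) by (simp add: t_def n_def)
  show "measure M (ball y t) \<le> 1 / target_degree n / V"
    unfolding M_def using assms(2-4) t small_ball_radius_power[OF r, of n]
    by (intro measure_uniform_measure_lborel_le)
      (auto simp: emeasure_ball_unit_vol_radius r_def n_def t_def target_degree_nonneg)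
  show "measure M (cball y (2 * r)) \<le> 2 ^ n / V"
    using measure_uniform_cball_le[OF assms(2-4), of "2 * r" y] r by (simp add: M_def r_def n_def)
  show "measure M (cball y (4 * r)) \<le> 4 ^ n / V"
    using measure_uniform_cball_le[OF assms(2-4), of "4 * r" y] r by (simp add: M_def r_def n_def)
  have "ln (real n) \<le> sqrt (real n)"
    using ln_le_sqrt[of "real n"] ln_bounds(1)[of n] assms(1) unfolding n_def by linarith
  then have "4 * r * (ln (real n) / sqrt (real n)) \<le> 4 * r * 1"
    using r assms(1) by (intro mult_left_mono) (auto simp: n_def)
  then have t_le: "t \<le> 2 * (2 * r)"
    by (simp add: t_def)
  assume "t \<le> dist y z"
  then have "measure M (cball y (2 * r) \<inter> cball z (2 * r)) \<le> (sqrt ((2 * r)\<^sup>2 - t\<^sup>2 / 4) / r) ^ n / V"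
    using measure_uniform_lens_le[OF assms(2-4) t t_le] unfolding M_def r_def n_def by blast
  also have "\<dots> \<le> 2 ^ n * exp (- (ln (real n))\<^sup>2 / 2) / V"
    using lens_radius_power_le[of n r] assms(1,4) r unfolding t_def n_def by (intro divide_right_mono) auto
  finally show "measure M (cball y (2 * r) \<inter> cball z (2 * r)) \<le> 2 ^ n * exp (- (ln (real n))\<^sup>2 / 2) / V" .
qed

lemma sample_size_after_deletion:
  fixes \<Delta> V N d :: real
  assumes "0 \<le> \<Delta>" "0 \<le> V" "\<Delta> * (1 - 1 / (2 * d)) / 2 ^ n * V \<le> N" "1 \<le> d"
  shows "(1 - 1 / d) * (\<Delta> / 2 ^ n) * V \<le> N * (1 - 1 / (2 * d))"
proof -
  have "1 - 2 * (1 / (2 * d)) \<le> (1 - 1 / (2 * d))\<^sup>2"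
    unfolding power2_diff by simp
  then have "(1 - 1 / d) * (\<Delta> / 2 ^ n * V) \<le> (1 - 1 / (2 * d))\<^sup>2 * (\<Delta> / 2 ^ n * V)"
    using assms(1,2,4) by (intro mult_right_mono) auto
  also have "\<dots> = (1 - 1 / (2 * d)) * (\<Delta> * (1 - 1 / (2 * d)) / 2 ^ n * V)"
    by (simp add: power2_eq_square)
  also have "\<dots> \<le> (1 - 1 / (2 * d)) * N"
    using assms(3,4) by (intro mult_left_mono) auto
  finally show ?thesis
    by (simp add: mult.commute mult.assoc)
qed

lemma exists_sparse_ball_graph_in_borel:
  fixes C :: "'a::euclidean_space set"
  assumes "1000 \<le> DIM('a)" "C \<in> sets borel" "emeasure lborel C = ennreal V" "0 < V"
  defines "n \<equiv> DIM('a)" and "r \<equiv> unit_vol_radius TYPE('a)"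
  shows "\<exists>X \<subseteq> C. finite X \<and> (1 - 1 / real n) * (target_degree n / 2 ^ n) * V \<le> real (card X) \<and>
    real (max_degree X r) \<le> target_degree n \<and>
    real (max_codegree X r) \<le> target_degree n * exp (- (ln (real n))\<^sup>2 / 8)"
proof -
  define t where "t = 4 * r * ln (real n) / sqrt (real n)"
  define N where "N = nat \<lceil>target_degree n * (1 - 1 / (2 * real n)) / 2 ^ n * V\<rceil>"
  have n: "1000 \<le> n"
    using assms(1) by (simp add: n_def)
  have "0 < target_degree n * (1 - 1 / (2 * real n)) / 2 ^ n * V"
    using target_degree_pos[OF n] n assms(4) by simp
  then have N: "target_degree n * (1 - 1 / (2 * real n)) / 2 ^ n * V \<le> real N"
    "real (N - 1) \<le> target_degree n * (1 - 1 / (2 * real n)) / 2 ^ n * V" "real (N - 2) \<le> real (N - 1)"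
    unfolding N_def by (linarith, simp add: of_nat_diff, linarith, simp)
  have "0 < t"
    using n unit_vol_radius_pos[where 'a='a] ln_bounds(1)[OF n] by (simp add: t_def r_def)
  then interpret random_ball_graph_deletion C r t "target_degree n"
      "target_degree n * exp (- (ln (real n))\<^sup>2 / 8)" "uniform_measure lborel C"
    using assms(2-4)
    by (simp add: random_ball_graph_deletion_def ball_graph_deletion_def iid_points_def iid_points_axioms_def
        random_ball_graph_deletion_axioms_def prob_space_uniform_measure emeasure_uniform_measure)
  note bounds = uniform_measure_ball_bounds[OF assms(1-4), folded n_def r_def, folded t_def]
  txt \<open>The exponential-moment parameters \<open>s = 1 / (4 n)\<close> and \<open>s' = 3 (log n)\<^sup>2 / 8\<close> of the
    two Chernoff bounds are the paper's choices; with them every point is bad with probability at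
    most \<open>1 / (2 n)\<close>.\<close>
  have "\<exists>X \<subseteq> C. finite X \<and> real (card {..<N}) * (1 - 1 / (2 * real n)) \<le> real (card X) \<and>
      real (max_degree X r) \<le> target_degree n \<and>
      real (max_codegree X r) \<le> target_degree n * exp (- (ln (real n))\<^sup>2 / 8)"
    using deletion_budget[OF n assms(4) _ N(2) _ N(3)]
    by (intro exists_sparse_subset[where s = "1 / (4 * real n)" and s' = "3 * (ln (real n))\<^sup>2 / 8",
          OF _ _ _ _ _ bounds(1,2) bounds(4) bounds(3)])
      (auto simp: target_degree_nonneg)
  then obtain X where "X \<subseteq> C" "finite X" "real N * (1 - 1 / (2 * real n)) \<le> real (card X)"
    "real (max_degree X r) \<le> target_degree n"
    "real (max_codegree X r) \<le> target_degree n * exp (- (ln (real n))\<^sup>2 / 8)"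
    by auto
  moreover have "(1 - 1 / real n) * (target_degree n / 2 ^ n) * V \<le> real N * (1 - 1 / (2 * real n))"
    using sample_size_after_deletion[OF target_degree_nonneg _ N(1)] assms(4) n by simp
  ultimately show ?thesis
    by (intro exI[of _ X]) auto
qed

lemma sets_lebesgue_inner_borel:
  assumes "S \<in> sets lebesgue"
  obtains C where "C \<in> sets borel" "C \<subseteq> S" "emeasure lborel C = emeasure lebesgue S"
proof
  show "main_part lborel S \<in> sets borel"
    using main_part_sets[OF assms] by simp
  show "main_part lborel S \<subseteq> S"
    using main_part_null_part_Un[OF assms] by blast
  show "emeasure lborel (main_part lborel S) = emeasure lebesgue S"
    using emeasure_completion[OF assms] by simp
qed

lemma exists_sparse_ball_graph:
  fixes \<Omega> :: "'a::euclidean_space set"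
  assumes "1000 \<le> DIM('a)" "bounded \<Omega>" "\<Omega> \<in> sets lebesgue"
  defines "n \<equiv> DIM('a)" and "r \<equiv> unit_vol_radius TYPE('a)"
  shows "\<exists>X \<subseteq> \<Omega>. finite X \<and>
    (1 - 1 / real n) * (target_degree n / 2 ^ n) * measure lebesgue \<Omega> \<le> real (card X) \<and>
    real (max_degree X r) \<le> target_degree n \<and>
    real (max_codegree X r) \<le> target_degree n * exp (- (ln (real n))\<^sup>2 / 8)"
proof (cases "measure lebesgue \<Omega> = 0")
  case True
  then show ?thesis
    using target_degree_nonneg by (intro exI[of _ "{}"]) (simp add: max_degree_def max_codegree_def)
next
  case False
  obtain C where C: "C \<in> sets borel" "C \<subseteq> \<Omega>" "emeasure lborel C = emeasure lebesgue \<Omega>"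
    using sets_lebesgue_inner_borel[OF assms(3)] .
  moreover have "emeasure lebesgue \<Omega> = ennreal (measure lebesgue \<Omega>)"
    using bounded_set_imp_lmeasurable[OF assms(2,3)] by (simp add: emeasure_eq_measure2)
  moreover have "0 < measure lebesgue \<Omega>"
    using False by (simp add: order_less_le)
  ultimately obtain X where "X \<subseteq> C" "finite X"
    "(1 - 1 / real n) * (target_degree n / 2 ^ n) * measure lebesgue \<Omega> \<le> real (card X)"
    "real (max_degree X r) \<le> target_degree n"
    "real (max_codegree X r) \<le> target_degree n * exp (- (ln (real n))\<^sup>2 / 8)"
    using exists_sparse_ball_graph_in_borel[OF assms(1), of C "measure lebesgue \<Omega>"] unfolding n_def r_def
    by auto
  with C(2) show ?thesis
    by blast
qed

theorem lemma2p1: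
  fixes \<Omega> :: "(real ^ 'n) set"
  assumes "CARD('n) \<ge> 1000"
    and "bounded \<Omega>" and "\<Omega> \<in> sets lebesgue"
  shows "\<exists>X. finite X \<and> X \<subseteq> \<Omega> \<and>
      real (card X) \<ge> (1 - 1 / real CARD('n)) *
        ((sqrt (real CARD('n)) / (4 * ln (real CARD('n)))) ^ CARD('n) / 2 ^ CARD('n)) * measure lebesgue \<Omega> \<and>
      real (max_degree X (unit_vol_radius TYPE(real ^ 'n))) \<le>
        (sqrt (real CARD('n)) / (4 * ln (real CARD('n)))) ^ CARD('n) *
        (1 + ((sqrt (real CARD('n)) / (4 * ln (real CARD('n)))) ^ CARD('n)) powr (-1/3)) \<and>
      real (max_codegree X (unit_vol_radius TYPE(real ^ 'n))) \<le>
        (sqrt (real CARD('n)) / (4 * ln (real CARD('n)))) ^ CARD('n) * exp (- ((ln (real CARD('n)))\<^sup>2) / 8)"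
proof -
  let ?\<Delta> = "target_degree CARD('n)"
  obtain X where X: "X \<subseteq> \<Omega>" "finite X"
    "(1 - 1 / real CARD('n)) * (?\<Delta> / 2 ^ CARD('n)) * measure lebesgue \<Omega> \<le> real (card X)"
    "real (max_degree X (unit_vol_radius TYPE(real ^ 'n))) \<le> ?\<Delta>"
    "real (max_codegree X (unit_vol_radius TYPE(real ^ 'n))) \<le> ?\<Delta> * exp (- (ln (real CARD('n)))\<^sup>2 / 8)"
    using exists_sparse_ball_graph[where 'a = "real ^ 'n", OF _ assms(2,3)] assms(1) by auto
  txt \<open>The construction already gives maximum degree at most \<open>\<Delta>\<close>; the factor
    \<open>1 + \<Delta> powr (-1/3)\<close> of the statement is slack.\<close>
  moreover have "?\<Delta> * 1 \<le> ?\<Delta> * (1 + ?\<Delta> powr (-1/3))"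
    using target_degree_nonneg by (intro mult_left_mono) auto
  ultimately show ?thesis
    unfolding target_degree_def[symmetric] by (intro exI[of _ X]) auto
qed

end
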